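(* Let $R$ be a commutative ring in which $2$ is invertible, let $Q$ be a quadratic space over $R$, and let $M=Q\perp\mathbb{H}(R)$. Then the DSER elementary orthogonal group coincides with the elementary orthogonal transvection group: $\mathrm{EO}_R(Q,\mathbb{H}(R))=\mathrm{ETransO}(M)$.
   Context: A quadratic $R$-module $(Q,q)$ is a finitely generated projective $R$-module with a quadratic form $q$; its bilinear form is $\langle x,y\rangle=q(x+y)-q(x)-q(y)$ (so $\langle x,x\rangle=2q(x)$). It is a quadratic space if $z\mapsto\langle z,-\rangle$ is an isomorphism $Q\to Q^*=\mathrm{Hom}_R(Q,R)$. For a finitely generated projective $P$, the hyperbolic space $\mathbb{H}(P)=P\oplus P^*$ carries $q(x,f)=f(x)$, i.e. $\langle(x_1,f_1),(x_2,f_2)\rangle=f_2(x_1)+f_1(x_2)$; orthogonal sums carry the sum of the forms. Here $P=R$ and $\mathbb{H}(R)$ has basis $x,f$ with $f(x)=1$. DSER transformations on $Q\perp\mathbb{H}(P)$: for $R$-linear $\alpha:Q\to P$, let $\alpha^*:P^*\to Q$ be determined by $\langle\alpha^*(g),z\rangle=g(\alpha(z))$ for all $z\in Q$, and set $E_\alpha(z,y,g)=(z-\alpha^*(g),\,y+\alpha(z)-\tfrac12\alpha\alpha^*(g),\,g)$. For $R$-linear $\beta:Q\to P^*$, let $\beta^*:P\to Q$ be determined by $\langle\beta^*(y),z\rangle=\beta(z)(y)$, and set $E^*_\beta(z,y,g)=(z-\beta^*(y),\,y,\,g+\beta(z)-\tfrac12\beta\beta^*(y))$. $\mathrm{EO}_R(Q,\mathbb{H}(P))$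 is the group generated by all $E_\alpha$, $E^*_\beta$. Elementary orthogonal transvections on $M=Q\perp\mathbb{H}(R)$: for $w\in Q$, writing elements as $(z,ax+bf)$ with $a,b\in R$, set $E^w_1(z,ax+bf)=(z-bw,\,(a+\langle z,w\rangle-bq(w))x+bf)$ and $E^w_2(z,ax+bf)=(z-aw,\,ax+(b+\langle z,w\rangle-aq(w))f)$. $\mathrm{ETransO}(M)$ is the group generated by all $E^w_1,E^w_2$, $w\in Q$. *)

theory Defs
  imports Main "HOL-Algebra.Bij" "HOL-Algebra.Generated_Groups"
begin

definition is_module :: "('r::comm_ring_1 \<Rightarrow> 'q::ab_group_add \<Rightarrow> 'q) \<Rightarrow> bool" where
  "is_module sc \<longleftrightarrow>
     (\<forall>a x y. sc a (x + y) = sc a x + sc a y) \<and>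
     (\<forall>a b x. sc (a + b) x = sc a x + sc b x) \<and>
     (\<forall>a b x. sc (a * b) x = sc a (sc b x)) \<and>
     (\<forall>x. sc 1 x = x)"

definition lin_fun :: "('r::comm_ring_1 \<Rightarrow> 'q::ab_group_add \<Rightarrow> 'q) \<Rightarrow> ('q \<Rightarrow> 'r) \<Rightarrow> bool" where
  "lin_fun sc f \<longleftrightarrow> (\<forall>x y. f (x + y) = f x + f y) \<and> (\<forall>a x. f (sc a x) = a * f x)"

text \<open>Finitely generated projective: Q is a retract of R^n, i.e. (dual basis) there are
  e_0..e_{n-1} in Q and linear functionals phi_k with x = sum_k phi_k(x) e_k.\<close>
definition fg_projective :: "('r::comm_ring_1 \<Rightarrow> 'q::ab_group_add \<Rightarrow> 'q) \<Rightarrow> bool" where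
  "fg_projective sc \<longleftrightarrow>
     (\<exists>(n::nat) (e::nat \<Rightarrow> 'q) (\<phi>::nat \<Rightarrow> 'q \<Rightarrow> 'r).
        (\<forall>k<n. lin_fun sc (\<phi> k)) \<and> (\<forall>x. x = (\<Sum>k<n. sc (\<phi> k x) (e k))))"

definition bil :: "('q::ab_group_add \<Rightarrow> 'r::comm_ring_1) \<Rightarrow> 'q \<Rightarrow> 'q \<Rightarrow> 'r" where
  "bil q x y = q (x + y) - q x - q y"

definition quadratic_form :: "('r::comm_ring_1 \<Rightarrow> 'q::ab_group_add \<Rightarrow> 'q) \<Rightarrow> ('q \<Rightarrow> 'r) \<Rightarrow> bool" where
  "quadratic_form sc q \<longleftrightarrow> (\<forall>a x. q (sc a x) = a^2 * q x) \<and> (\<forall>x. lin_fun sc (bil q x))"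

definition quadratic_space :: "('r::comm_ring_1 \<Rightarrow> 'q::ab_group_add \<Rightarrow> 'q) \<Rightarrow> ('q \<Rightarrow> 'r) \<Rightarrow> bool" where
  "quadratic_space sc q \<longleftrightarrow> is_module sc \<and> fg_projective sc \<and> quadratic_form sc q \<and>
     (\<forall>f. lin_fun sc f \<longrightarrow> (\<exists>!z. \<forall>y. bil q z y = f y))"

definition half :: "'r::comm_ring_1" where
  "half = (THE h. 2 * h = 1)"

text \<open>Elements of M = Q \<perp> H(R) are triples (z, a, b) standing for (z, a x + b f);
  an element g of P^* = Hom(R,R) is identified with g(1) \<in> R.
  adj q \<alpha> c is the unique w with \<langle>w, z\<rangle> = c * \<alpha> z for all z; this is \<alpha>^*(g) for
  \<alpha> : Q \<rightarrow> P, g = c, and also \<beta>^*(y) for \<beta> : Q \<rightarrow> P^*, y = c.\<close>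
definition adj :: "('q::ab_group_add \<Rightarrow> 'r::comm_ring_1) \<Rightarrow> ('q \<Rightarrow> 'r) \<Rightarrow> 'r \<Rightarrow> 'q" where
  "adj q \<alpha> c = (THE w. \<forall>z. bil q w z = c * \<alpha> z)"

definition E_alpha :: "('q::ab_group_add \<Rightarrow> 'r::comm_ring_1) \<Rightarrow> ('q \<Rightarrow> 'r) \<Rightarrow> 'q \<times> 'r \<times> 'r \<Rightarrow> 'q \<times> 'r \<times> 'r" where
  "E_alpha q \<alpha> = (\<lambda>(z, y, g). (z - adj q \<alpha> g, y + \<alpha> z - half * \<alpha> (adj q \<alpha> g), g))"

definition E_beta :: "('q::ab_group_add \<Rightarrow> 'r::comm_ring_1) \<Rightarrow> ('q \<Rightarrow> 'r) \<Rightarrow> 'q \<times> 'r \<times> 'r \<Rightarrow> 'q \<times> 'r \<times> 'r" where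
  "E_beta q \<beta> = (\<lambda>(z, y, g). (z - adj q \<beta> y, y, g + \<beta> z - half * \<beta> (adj q \<beta> y)))"

definition E1 :: "('r::comm_ring_1 \<Rightarrow> 'q::ab_group_add \<Rightarrow> 'q) \<Rightarrow> ('q \<Rightarrow> 'r) \<Rightarrow> 'q \<Rightarrow> 'q \<times> 'r \<times> 'r \<Rightarrow> 'q \<times> 'r \<times> 'r" where
  "E1 sc q w = (\<lambda>(z, a, b). (z - sc b w, a + bil q z w - b * q w, b))"

definition E2 :: "('r::comm_ring_1 \<Rightarrow> 'q::ab_group_add \<Rightarrow> 'q) \<Rightarrow> ('q \<Rightarrow> 'r) \<Rightarrow> 'q \<Rightarrow> 'q \<times> 'r \<times> 'r \<Rightarrow> 'q \<times> 'r \<times> 'r" where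
  "E2 sc q w = (\<lambda>(z, a, b). (z - sc a w, a, b + bil q z w - a * q w))"

definition EO :: "('r::comm_ring_1 \<Rightarrow> 'q::ab_group_add \<Rightarrow> 'q) \<Rightarrow> ('q \<Rightarrow> 'r) \<Rightarrow> ('q \<times> 'r \<times> 'r \<Rightarrow> 'q \<times> 'r \<times> 'r) set" where
  "EO sc q = generate (BijGroup UNIV)
     ({E_alpha q \<alpha> | \<alpha>. lin_fun sc \<alpha>} \<union> {E_beta q \<beta> | \<beta>. lin_fun sc \<beta>})"

definition ETransO :: "('r::comm_ring_1 \<Rightarrow> 'q::ab_group_add \<Rightarrow> 'q) \<Rightarrow> ('q \<Rightarrow> 'r) \<Rightarrow> ('q \<times> 'r \<times> 'r \<Rightarrow> 'q \<times> 'r \<times> 'r) set" where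
  "ETransO sc q = generate (BijGroup UNIV) (range (E1 sc q) \<union> range (E2 sc q))"

end

theory Submission
  imports Defs
begin

text \<open>Over a quadratic space every linear form on \<open>Q\<close> is \<open>\<langle>w, -\<rangle>\<close> for a unique \<open>w\<close>.
  For \<open>\<alpha> = \<langle>w, -\<rangle>\<close> one finds \<open>\<alpha>\<^sup>*(g) = g w\<close> and \<open>\<onehalf> \<alpha> \<alpha>\<^sup>*(g) = g q(w)\<close>, so the DSER
  transformation \<open>E\<^sub>\<alpha>\<close> is literally the transvection \<open>E\<^sub>1\<^sup>w\<close>, and likewise \<open>E\<^sup>*\<^sub>\<beta> = E\<^sub>2\<^sup>w\<close>.
  The two groups are therefore generated by the same set of bijections.\<close>

lemma two_mult_half:
  assumes "(2::'a::comm_ring_1) dvd 1"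
  shows "2 * (half::'a) = 1"
proof -
  obtain k :: 'a where k: "1 = 2 * k" using assms by (auto elim: dvdE)
  have "\<exists>!h::'a. 2 * h = 1"
  proof
    show "2 * k = 1" using k by simp
  next
    fix h :: 'a assume h: "2 * h = 1"
    have "h = h * (2 * k)" using k by simp
    also have "\<dots> = (2 * h) * k" by (simp add: algebra_simps)
    finally show "h = k" using h by simp
  qed
  then show ?thesis unfolding half_def by (rule theI')
qed

lemma bil_commute: "bil q x y = bil q y x"
  unfolding bil_def by (simp add: algebra_simps)

lemma bil_scaleR:
  assumes "quadratic_form sc q"
  shows "bil q x (sc c y) = c * bil q x y"
  using assms unfolding quadratic_form_def lin_fun_def by blast

lemma bil_scaleL:
  assumes "quadratic_form sc q"
  shows "bil q (sc c x) y = c * bil q x y"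
  using bil_scaleR[OF assms] by (simp add: bil_commute[of q _ y])

lemma bil_self:
  assumes "is_module sc" and "quadratic_form sc q"
  shows "bil q x x = 2 * q x"
proof -
  have "sc 2 x = x + x"
    using assms(1) unfolding is_module_def by (metis one_add_one)
  then have "q (x + x) = 2\<^sup>2 * q x"
    using assms(2) unfolding quadratic_form_def by metis
  then show ?thesis unfolding bil_def by (simp add: algebra_simps)
qed

lemma half_mult_bil_scale:
  assumes "(2::'r::comm_ring_1) dvd 1" and "is_module sc"
    and "quadratic_form sc (q :: 'q::ab_group_add \<Rightarrow> 'r)"
  shows "half * bil q x (sc c x) = c * q x"
proof -
  have "half * bil q x (sc c x) = c * (2 * half) * q x"
    by (simp add: bil_scaleR[OF assms(3)] bil_self[OF assms(2,3)] ac_simps)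
  then show ?thesis by (simp add: two_mult_half[OF assms(1)])
qed

lemma range_bil_eq_lin_fun:
  assumes "quadratic_space sc q"
  shows "range (bil q) = {\<alpha>. lin_fun sc \<alpha>}"
proof (intro equalityI subsetI)
  fix \<alpha> assume "\<alpha> \<in> range (bil q)"
  then show "\<alpha> \<in> {\<alpha>. lin_fun sc \<alpha>}"
    using assms unfolding quadratic_space_def quadratic_form_def by blast
next
  fix \<alpha> assume "\<alpha> \<in> {\<alpha>. lin_fun sc \<alpha>}"
  then obtain w where "\<forall>z. bil q w z = \<alpha> z"
    using assms unfolding quadratic_space_def by blast
  then have "bil q w = \<alpha>" by blast
  then show "\<alpha> \<in> range (bil q)" by blast
qed

lemma adj_bil:
  assumes "quadratic_space sc q"
  shows "adj q (bil q w) c = sc c w"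
proof -
  have qf: "quadratic_form sc q" using assms unfolding quadratic_space_def by blast
  have "lin_fun sc (\<lambda>z. c * bil q w z)"
    using qf unfolding quadratic_form_def lin_fun_def by (simp add: algebra_simps)
  then have "\<exists>!v. \<forall>z. bil q v z = c * bil q w z"
    using assms unfolding quadratic_space_def by blast
  moreover have "\<forall>z. bil q (sc c w) z = c * bil q w z" by (simp add: bil_scaleL[OF qf])
  ultimately show ?thesis unfolding adj_def by (rule the1_equality)
qed

context
  fixes sc :: "'r::comm_ring_1 \<Rightarrow> 'q::ab_group_add \<Rightarrow> 'q" and q :: "'q \<Rightarrow> 'r"
  assumes two: "(2::'r) dvd 1" and qs: "quadratic_space sc q"
begin

lemma half_mult_bil_scale_space: "half * bil q x (sc c x) = c * q x"
  using half_mult_bil_scale[OF two] qs unfolding quadratic_space_def by blast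

lemma E_alpha_bil: "E_alpha q (bil q w) = E1 sc q w"
proof (rule ext, clarify)
  fix z a b
  show "E_alpha q (bil q w) (z, a, b) = E1 sc q w (z, a, b)"
    unfolding E_alpha_def E1_def
    by (simp add: adj_bil[OF qs] half_mult_bil_scale_space bil_commute[of q w z])
qed

lemma E_beta_bil: "E_beta q (bil q w) = E2 sc q w"
proof (rule ext, clarify)
  fix z a b
  show "E_beta q (bil q w) (z, a, b) = E2 sc q w (z, a, b)"
    unfolding E_beta_def E2_def
    by (simp add: adj_bil[OF qs] half_mult_bil_scale_space bil_commute[of q w z])
qed

end

theorem mainTheorem1:
  fixes sc :: "'r::comm_ring_1 \<Rightarrow> 'q::ab_group_add \<Rightarrow> 'q" and q :: "'q \<Rightarrow> 'r"
  assumes "(2::'r) dvd 1"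
    and "quadratic_space sc q"
  shows "EO sc q = ETransO sc q"
proof -
  have "{E_alpha q \<alpha> | \<alpha>. lin_fun sc \<alpha>} = E_alpha q ` range (bil q)"
    and "{E_beta q \<beta> | \<beta>. lin_fun sc \<beta>} = E_beta q ` range (bil q)"
    unfolding range_bil_eq_lin_fun[OF assms(2)] by blast+
  then show ?thesis
    unfolding EO_def ETransO_def by (simp add: image_image E_alpha_bil[OF assms] E_beta_bil[OF assms])
qed

end
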